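(* Let $k$ be a field of characteristic $p >0$, let $d_1,\ldots,d_n$ be positive integers, let $A=k[x_1, \ldots, x_n]/(x_1^{d_1}, \ldots, x_n^{d_n})$, and let $t = \sum_{i=1}^n (d_i - 1)$. Let $m$ be a positive integer such that $m+t <2p$. Then for every integer $i$ with $0\le i \le (t-m)/2$, the map $A_i \to A_{i+m}$ given by $f \mapsto f \cdot (x_1+ \dots +x_n)^m$ is injective.
   Context: $A$ is graded by degree, $A=\bigoplus_{i\ge 0}A_i$, with $A_i$ the image of the homogeneous polynomials of degree $i$. *)

theory Defs
  imports Main
begin

text \<open>The truncated polynomial ring A = k[x_0,...,x_(n-1)]/(x_j^(d j)), realised
  concretely: monomials are exponent vectors a :: nat => nat with a j < d j for j < n
  and a j = 0 for j >= n (the standard monomial basis of A); an element of A is its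
  coefficient function, vanishing outside this box.\<close>

definition mon_box :: "nat \<Rightarrow> (nat \<Rightarrow> nat) \<Rightarrow> (nat \<Rightarrow> nat) set" where
  "mon_box n d = {a. (\<forall>j<n. a j < d j) \<and> (\<forall>j\<ge>n. a j = 0)}"

definition trunc_ring :: "nat \<Rightarrow> (nat \<Rightarrow> nat) \<Rightarrow> ((nat \<Rightarrow> nat) \<Rightarrow> 'a::field) set" where
  "trunc_ring n d = {f. \<forall>a. a \<notin> mon_box n d \<longrightarrow> f a = 0}"

definition tmul :: "nat \<Rightarrow> (nat \<Rightarrow> nat) \<Rightarrow> ((nat \<Rightarrow> nat) \<Rightarrow> 'a::field)
    \<Rightarrow> ((nat \<Rightarrow> nat) \<Rightarrow> 'a) \<Rightarrow> ((nat \<Rightarrow> nat) \<Rightarrow> 'a)" where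
  "tmul n d f g = (\<lambda>c. if c \<in> mon_box n d then
       (\<Sum>a\<in>mon_box n d. \<Sum>b\<in>mon_box n d. if (\<lambda>j. a j + b j) = c then f a * g b else 0)
     else 0)"

definition tone :: "nat \<Rightarrow> (nat \<Rightarrow> nat) \<Rightarrow> ((nat \<Rightarrow> nat) \<Rightarrow> 'a::field)" where
  "tone n d = (\<lambda>a. if a = (\<lambda>_. 0) \<and> a \<in> mon_box n d then 1 else 0)"

text \<open>The image of the variable x_j in A (zero if d j = 1).\<close>
definition tvar :: "nat \<Rightarrow> (nat \<Rightarrow> nat) \<Rightarrow> nat \<Rightarrow> ((nat \<Rightarrow> nat) \<Rightarrow> 'a::field)" where
  "tvar n d j = (\<lambda>a. if a = (\<lambda>i. if i = j then 1 else 0) \<and> a \<in> mon_box n d then 1 else 0)"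

definition tpow :: "nat \<Rightarrow> (nat \<Rightarrow> nat) \<Rightarrow> ((nat \<Rightarrow> nat) \<Rightarrow> 'a::field) \<Rightarrow> nat
    \<Rightarrow> ((nat \<Rightarrow> nat) \<Rightarrow> 'a)" where
  "tpow n d f m = (tmul n d f ^^ m) (tone n d)"

definition tlin :: "nat \<Rightarrow> (nat \<Rightarrow> nat) \<Rightarrow> ((nat \<Rightarrow> nat) \<Rightarrow> 'a::field)" where
  "tlin n d = (\<lambda>a. \<Sum>j<n. tvar n d j a)"

definition tgraded :: "nat \<Rightarrow> (nat \<Rightarrow> nat) \<Rightarrow> nat \<Rightarrow> ((nat \<Rightarrow> nat) \<Rightarrow> 'a::field) set" where
  "tgraded n d i = {f \<in> trunc_ring n d. \<forall>a. f a \<noteq> 0 \<longrightarrow> (\<Sum>j<n. a j) = i}"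

end

theory Submission
  imports Defs "HOL-Library.FuncSet"
begin

text \<open>
  On coefficient functions, multiplication by l = x_1 + ... + x_n is the raising operator E of
  an sl_2-structure on A: there is a lowering operator F with EF - FE = 2i - t on A_i.
  Complete reducibility fails in characteristic p, so we argue by induction on t, showing that
  E^m is injective on A_i whenever 2i + m <= t and 1, ..., i + m are nonzero in k.

  If 2i + m < t then some d_j >= 2. The quotient A/(x_j^(d_j - 1)) and the ideal
  x_j^(d_j - 1) A, isomorphic to A/(x_j), are truncated rings of the same kind with smaller t,
  on which l acts in the same way, and injectivity on both gives injectivity on A_i.
  If 2i + m = t and E^m f = 0, then E^(m+1) (F f) = 0 in degree i - 1, a case of the first
  kind, so F f = 0. For such a primitive f of weight -m one has F E^(r+1) f = -(r+1)(m-r) E^r f,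
  whose coefficient is a unit for r < m, so E^m f = 0 forces f = 0.
\<close>

section \<open>The truncated polynomial ring\<close>

lemma sum_fun_upd_add:
  fixes c :: "'b \<Rightarrow> 'a::comm_monoid_add"
  assumes "finite A" and "j \<in> A"
  shows "sum (c(j := v)) A + c j = sum c A + v"
  using assms by (simp add: sum.remove[of A j] ac_simps)

lemma finite_mon_box: "finite (mon_box n d)"
proof -
  let ?ext = "\<lambda>a::nat \<Rightarrow> nat. \<lambda>j. if j < n then a j else 0"
  have "mon_box n d \<subseteq> ?ext ` (\<Pi>\<^sub>E j\<in>{..<n}. {..<d j})"
  proof
    fix a assume a: "a \<in> mon_box n d"
    then have "a = ?ext (restrict a {..<n})"
      by (auto simp: mon_box_def fun_eq_iff)
    moreover have "restrict a {..<n} \<in> (\<Pi>\<^sub>E j\<in>{..<n}. {..<d j})"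
      using a by (auto simp: mon_box_def)
    ultimately show "a \<in> ?ext ` (\<Pi>\<^sub>E j\<in>{..<n}. {..<d j})" by blast
  qed
  then show ?thesis
    by (rule finite_subset) (intro finite_imageI finite_PiE; simp)
qed

lemma mon_box_summand: "(\<lambda>j. a j + b j) \<in> mon_box n d \<Longrightarrow> b \<in> mon_box n d"
  by (auto simp: mon_box_def dest: spec add_eq_0_iff_both_eq_0[THEN iffD1])

lemma zero_in_mon_box: "\<forall>j<n. d j > 0 \<Longrightarrow> (\<lambda>_. 0) \<in> mon_box n d"
  by (simp add: mon_box_def)

lemma mon_box_fun_upd_le: "c \<in> mon_box n d \<Longrightarrow> v \<le> c j \<Longrightarrow> c(j := v) \<in> mon_box n d"
  by (auto simp: mon_box_def)

lemma tmul_tone: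
  assumes "\<forall>j<n. d j > 0" and "f \<in> trunc_ring n d"
  shows "tmul n d f (tone n d) = f"
proof
  fix c
  have "(if (\<lambda>j. a j + b j) = c then f a * tone n d b else 0)
      = (if b = (\<lambda>_. 0) then (if a = c then f a else 0) else 0)" for a b
    using zero_in_mon_box[OF assms(1)] by (auto simp: tone_def)
  then show "tmul n d f (tone n d) c = f c"
    using assms(2) finite_mon_box zero_in_mon_box[OF assms(1)]
    by (simp add: tmul_def trunc_ring_def)
qed

lemma tmul_commute: "tmul n d f g = tmul n d g f"
proof
  fix c
  have "(\<Sum>a\<in>mon_box n d. \<Sum>b\<in>mon_box n d. if (\<lambda>j. a j + b j) = c then f a * g b else 0)
      = (\<Sum>b\<in>mon_box n d. \<Sum>a\<in>mon_box n d. if (\<lambda>j. b j + a j) = c then g b * f a else 0)"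
    by (subst sum.swap) (intro sum.cong refl; simp add: add.commute mult.commute)
  then show "tmul n d f g c = tmul n d g f c"
    by (simp add: tmul_def)
qed

lemma tmul_tmul_expand:
  assumes "c \<in> mon_box n d"
  shows "tmul n d f (tmul n d g h) c = (\<Sum>x\<in>mon_box n d. \<Sum>y\<in>mon_box n d. \<Sum>z\<in>mon_box n d.
           if (\<lambda>j. x j + y j + z j) = c then f x * g y * h z else 0)"
proof -
  let ?B = "mon_box n d"
  have "(\<Sum>b\<in>?B. if (\<lambda>j. x j + b j) = c then f x * tmul n d g h b else 0)
      = (\<Sum>b\<in>?B. \<Sum>y\<in>?B. \<Sum>z\<in>?B. if (\<lambda>j. y j + z j) = b then
           (if (\<lambda>j. x j + y j + z j) = c then f x * g y * h z else 0) else 0)" for x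
  proof (intro sum.cong refl)
    fix b assume "b \<in> ?B"
    have "(\<lambda>j. x j + y j + z j) = c \<longleftrightarrow> (\<lambda>j. x j + b j) = c"
      if "(\<lambda>j. y j + z j) = b" for y z
      using that by (auto simp: add.assoc)
    then show "(if (\<lambda>j. x j + b j) = c then f x * tmul n d g h b else 0)
        = (\<Sum>y\<in>?B. \<Sum>z\<in>?B. if (\<lambda>j. y j + z j) = b then
           (if (\<lambda>j. x j + y j + z j) = c then f x * g y * h z else 0) else 0)"
      using \<open>b \<in> ?B\<close>
      by (auto simp: tmul_def sum_distrib_left mult.assoc intro!: sum.cong sum.neutral)
  qed
  also have "\<dots> x = (\<Sum>y\<in>?B. \<Sum>z\<in>?B. \<Sum>b\<in>?B. if (\<lambda>j. y j + z j) = b then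
           (if (\<lambda>j. x j + y j + z j) = c then f x * g y * h z else 0) else 0)" for x
    by (subst sum.swap) (rule sum.cong[OF refl], rule sum.swap)
  also have "\<dots> x = (\<Sum>y\<in>?B. \<Sum>z\<in>?B.
           if (\<lambda>j. x j + y j + z j) = c then f x * g y * h z else 0)" for x
  proof -
    have "(\<lambda>j. x j + y j + z j) = c \<Longrightarrow> (\<lambda>j. y j + z j) \<in> ?B" for y z
      using mon_box_summand[of x "\<lambda>j. y j + z j"] assms by (simp add: add.assoc)
    then show ?thesis
      using finite_mon_box by (auto intro!: sum.cong)
  qed
  finally have "(\<Sum>b\<in>?B. if (\<lambda>j. x j + b j) = c then f x * tmul n d g h b else 0)
      = (\<Sum>y\<in>?B. \<Sum>z\<in>?B. if (\<lambda>j. x j + y j + z j) = c then f x * g y * h z else 0)" for x .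
  then show ?thesis
    using assms unfolding tmul_def[of n d f "tmul n d g h"] by simp
qed

text \<open>By commutativity both sides are instances of the triple sum of \<open>tmul_tmul_expand\<close>.\<close>

lemma tmul_assoc: "tmul n d f (tmul n d g h) = tmul n d (tmul n d f g) h"
proof
  fix c
  show "tmul n d f (tmul n d g h) c = tmul n d (tmul n d f g) h c"
  proof (cases "c \<in> mon_box n d")
    case True
    let ?B = "mon_box n d"
    have "tmul n d f (tmul n d g h) c = (\<Sum>x\<in>?B. \<Sum>z\<in>?B. \<Sum>y\<in>?B.
           if (\<lambda>j. x j + y j + z j) = c then f x * g y * h z else 0)"
      unfolding tmul_tmul_expand[OF True] by (rule sum.cong[OF refl], rule sum.swap)
    also have "\<dots> = (\<Sum>z\<in>?B. \<Sum>x\<in>?B. \<Sum>y\<in>?B.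
           if (\<lambda>j. x j + y j + z j) = c then f x * g y * h z else 0)"
      by (rule sum.swap)
    also have "\<dots> = tmul n d h (tmul n d f g) c"
      unfolding tmul_tmul_expand[OF True] by (intro sum.cong refl) (simp add: ac_simps)
    finally show ?thesis
      by (simp add: tmul_commute[of n d h])
  qed (simp add: tmul_def)
qed

section \<open>Multiplication by the linear form\<close>

definition raise_at :: "nat \<Rightarrow> (nat \<Rightarrow> nat) \<Rightarrow> nat \<Rightarrow> ((nat \<Rightarrow> nat) \<Rightarrow> 'a::field)
    \<Rightarrow> ((nat \<Rightarrow> nat) \<Rightarrow> 'a)" where
  "raise_at n d j f = (\<lambda>c. if c \<in> mon_box n d \<and> 0 < c j then f (c(j := c j - 1)) else 0)"

definition raise_op :: "nat \<Rightarrow> (nat \<Rightarrow> nat) \<Rightarrow> ((nat \<Rightarrow> nat) \<Rightarrow> 'a::field)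
    \<Rightarrow> ((nat \<Rightarrow> nat) \<Rightarrow> 'a)" where
  "raise_op n d f = (\<lambda>c. \<Sum>j<n. raise_at n d j f c)"

lemma add_unit_vector_eq_iff:
  fixes a c :: "nat \<Rightarrow> nat"
  shows "(\<lambda>i. a i + (if i = j then 1 else 0)) = c \<longleftrightarrow> 0 < c j \<and> a = c(j := c j - 1)"
  by (auto simp: fun_eq_iff split: if_splits)

lemma tmul_tvar: "tmul n d f (tvar n d j) = raise_at n d j f"
proof
  fix c
  let ?B = "mon_box n d" and ?e = "\<lambda>i. if i = j then 1 else (0::nat)"
  show "tmul n d f (tvar n d j) c = raise_at n d j f c"
  proof (cases "c \<in> ?B \<and> 0 < c j")
    case True
    then have "?e \<in> ?B" and "c(j := c j - 1) \<in> ?B"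
      by (auto simp: mon_box_def)
    have "(if (\<lambda>i. a i + b i) = c then f a * tvar n d j b else 0)
        = (if b = ?e then (if a = c(j := c j - 1) then f a else 0) else 0)" for a b
      using True \<open>?e \<in> ?B\<close> by (auto simp: tvar_def add_unit_vector_eq_iff)
    then have "tmul n d f (tvar n d j) c = (\<Sum>a\<in>?B. if a = c(j := c j - 1) then f a else 0)"
      using True \<open>?e \<in> ?B\<close> finite_mon_box by (simp add: tmul_def)
    then show ?thesis
      using True \<open>c(j := c j - 1) \<in> ?B\<close> finite_mon_box by (simp add: raise_at_def)
  next
    case False
    then have "c \<in> ?B \<Longrightarrow> (if (\<lambda>i. a i + b i) = c then f a * tvar n d j b else 0) = 0" for a b
      by (auto simp: tvar_def)
    then show ?thesis
      using False by (simp add: tmul_def raise_at_def)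
  qed
qed

lemma tmul_sum_right: "tmul n d f (\<lambda>b. \<Sum>j\<in>J. g j b) c = (\<Sum>j\<in>J. tmul n d f (g j) c)"
proof (cases "c \<in> mon_box n d")
  case True
  let ?B = "mon_box n d"
  have "tmul n d f (\<lambda>b. \<Sum>j\<in>J. g j b) c
      = (\<Sum>a\<in>?B. \<Sum>b\<in>?B. \<Sum>j\<in>J. if (\<lambda>i. a i + b i) = c then f a * g j b else 0)"
    using True by (simp add: tmul_def) (intro sum.cong refl; simp add: sum_distrib_left)
  also have "\<dots> = (\<Sum>a\<in>?B. \<Sum>j\<in>J. \<Sum>b\<in>?B. if (\<lambda>i. a i + b i) = c then f a * g j b else 0)"
    by (rule sum.cong[OF refl], rule sum.swap)
  also have "\<dots> = (\<Sum>j\<in>J. tmul n d f (g j) c)"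
    using True by (subst sum.swap) (simp add: tmul_def)
  finally show ?thesis .
qed (simp add: tmul_def)

lemma tmul_tlin: "tmul n d f (tlin n d) = raise_op n d f"
  by (rule ext) (simp add: tlin_def raise_op_def tmul_sum_right tmul_tvar)

lemma raise_op_in_trunc_ring: "raise_op n d f \<in> trunc_ring n d"
  by (simp add: raise_op_def raise_at_def trunc_ring_def)

lemma tmul_tpow_tlin:
  assumes "\<forall>j<n. d j > 0" and "f \<in> trunc_ring n d"
  shows "tmul n d f (tpow n d (tlin n d) m) = (raise_op n d ^^ m) f"
  using assms(2)
proof (induction m arbitrary: f)
  case 0
  then show ?case by (simp add: tpow_def tmul_tone[OF assms(1)])
next
  case (Suc m)
  have "tmul n d f (tpow n d (tlin n d) (Suc m))
      = tmul n d (raise_op n d f) (tpow n d (tlin n d) m)"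
    by (simp add: tpow_def tmul_assoc tmul_tlin)
  also have "\<dots> = (raise_op n d ^^ Suc m) f"
    by (simp add: Suc.IH[OF raise_op_in_trunc_ring] funpow_Suc_right del: funpow.simps)
  finally show ?case .
qed

section \<open>The lowering operator\<close>

text \<open>On monomials F x^c = sum_j c_j (d_j - c_j) x^(c - e_j): on each factor k[x]/(x^d) this is
  the lowering operator of the d-dimensional sl_2-module in which multiplication by x raises.\<close>

definition lower_at :: "nat \<Rightarrow> (nat \<Rightarrow> nat) \<Rightarrow> nat \<Rightarrow> ((nat \<Rightarrow> nat) \<Rightarrow> 'a::field)
    \<Rightarrow> ((nat \<Rightarrow> nat) \<Rightarrow> 'a)" where
  "lower_at n d j f = (\<lambda>c. if c \<in> mon_box n d
     then of_nat ((c j + 1) * (d j - c j - 1)) * f (c(j := c j + 1)) else 0)"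

definition lower_op :: "nat \<Rightarrow> (nat \<Rightarrow> nat) \<Rightarrow> ((nat \<Rightarrow> nat) \<Rightarrow> 'a::field)
    \<Rightarrow> ((nat \<Rightarrow> nat) \<Rightarrow> 'a)" where
  "lower_op n d f = (\<lambda>c. \<Sum>j<n. lower_at n d j f c)"

lemma raise_at_sum: "raise_at n d l (\<lambda>c. \<Sum>j\<in>J. g j c) c = (\<Sum>j\<in>J. raise_at n d l (g j) c)"
  unfolding raise_at_def
  by (cases "c \<in> mon_box n d \<and> 0 < c l") (simp_all only: simp_thms if_True if_False sum.neutral_const)

lemma lower_at_sum: "lower_at n d l (\<lambda>c. \<Sum>j\<in>J. g j c) c = (\<Sum>j\<in>J. lower_at n d l (g j) c)"
  by (simp add: lower_at_def sum_distrib_left)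

lemma raise_lower_at_commute:
  assumes "j < n" and "l \<noteq> j"
  shows "raise_at n d l (lower_at n d j f) c = lower_at n d j (raise_at n d l f) c"
proof (cases "c \<in> mon_box n d")
  case True
  have "d j - c j - 1 = 0" if "c(j := c j + 1) \<notin> mon_box n d"
    using that True assms(1) by (auto simp: mon_box_def split: if_splits)
  then show ?thesis
    using True assms(2) mon_box_fun_upd_le[OF True, of "c l - 1" l]
    by (cases "c(j := c j + 1) \<in> mon_box n d")
      (auto simp: raise_at_def lower_at_def fun_upd_twist[OF assms(2)])
qed (simp add: raise_at_def lower_at_def)

lemma of_nat_box_coefficient_diff:
  assumes "x < (e::nat)"
  shows "(of_nat (x * (e - x)) - of_nat ((x + 1) * (e - x - 1)) :: 'a::comm_ring_1)
    = of_int (2 * int x + 1 - int e)"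
proof -
  obtain r where "e = x + 1 + r"
    using assms by (auto simp: less_iff_Suc_add)
  then show ?thesis
    by (simp add: algebra_simps)
qed

lemma raise_lower_at_diag:
  assumes "j < n" and "f \<in> trunc_ring n d"
  shows "raise_at n d j (lower_at n d j f) c - lower_at n d j (raise_at n d j f) c
    = of_int (2 * int (c j) + 1 - int (d j)) * f c"
proof (cases "c \<in> mon_box n d")
  case True
  have "raise_at n d j (lower_at n d j f) c = of_nat (c j * (d j - c j)) * f c"
    using mon_box_fun_upd_le[OF True, of "c j - 1" j]
    by (cases "c j") (auto simp: raise_at_def lower_at_def True fun_upd_idem)
  moreover have "d j - c j - 1 = 0" if "c(j := c j + 1) \<notin> mon_box n d"
    using that True assms(1) by (auto simp: mon_box_def split: if_splits)
  then have "lower_at n d j (raise_at n d j f) c = of_nat ((c j + 1) * (d j - c j - 1)) * f c"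
    by (cases "c(j := c j + 1) \<in> mon_box n d") (auto simp: raise_at_def lower_at_def True)
  moreover have "c j < d j"
    using True assms(1) by (simp add: mon_box_def)
  ultimately show ?thesis
    by (simp only: left_diff_distrib[symmetric] of_nat_box_coefficient_diff)
qed (use assms(2) in \<open>simp add: raise_at_def lower_at_def trunc_ring_def\<close>)

lemma raise_op_nonzero_degree:
  assumes "f \<in> tgraded n d i" and "raise_op n d f c \<noteq> 0"
  shows "(\<Sum>l<n. c l) = Suc i"
proof -
  obtain j where "j < n" and "raise_at n d j f c \<noteq> 0"
    using assms(2) sum.not_neutral_contains_not_neutral by (force simp: raise_op_def)
  then have "0 < c j" and "(\<Sum>l<n. (c(j := c j - 1)) l) = i"
    using assms(1) by (auto simp: raise_at_def tgraded_def split: if_splits)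
  then show ?thesis
    using sum_fun_upd_add[of "{..<n}" j c "c j - 1"] \<open>j < n\<close> by simp
qed

lemma lower_op_nonzero_degree:
  assumes "f \<in> tgraded n d i" and "lower_op n d f c \<noteq> 0"
  shows "Suc (\<Sum>l<n. c l) = i"
proof -
  obtain j where "j < n" and "lower_at n d j f c \<noteq> 0"
    using assms(2) sum.not_neutral_contains_not_neutral by (force simp: lower_op_def)
  then have "(\<Sum>l<n. (c(j := c j + 1)) l) = i"
    using assms(1) by (auto simp: lower_at_def tgraded_def split: if_splits)
  then show ?thesis
    using sum_fun_upd_add[of "{..<n}" j c "c j + 1"] \<open>j < n\<close> by simp
qed

lemma raise_op_graded: "f \<in> tgraded n d i \<Longrightarrow> raise_op n d f \<in> tgraded n d (Suc i)"
  using raise_op_nonzero_degree[of f n d i] raise_op_in_trunc_ring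
  by (auto simp: tgraded_def[of n d "Suc i"])

lemma raise_pow_graded: "f \<in> tgraded n d i \<Longrightarrow> (raise_op n d ^^ k) f \<in> tgraded n d (i + k)"
  by (induction k) (simp_all add: raise_op_graded)

lemma lower_op_graded: "f \<in> tgraded n d i \<Longrightarrow> lower_op n d f \<in> tgraded n d (i - 1)"
  using lower_op_nonzero_degree[of f n d i]
  by (fastforce simp: tgraded_def trunc_ring_def lower_op_def lower_at_def)

lemma lower_op_degree_zero: "f \<in> tgraded n d 0 \<Longrightarrow> lower_op n d f = (\<lambda>_. 0)"
  using lower_op_nonzero_degree by fastforce

definition sl2_weight :: "nat \<Rightarrow> (nat \<Rightarrow> nat) \<Rightarrow> nat \<Rightarrow> int" where
  "sl2_weight n d i = 2 * int i - int (\<Sum>j<n. d j - 1)"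

lemma raise_lower_commutator:
  assumes "f \<in> tgraded n d i" and "\<forall>j<n. d j > 0"
  shows "raise_op n d (lower_op n d f) c - lower_op n d (raise_op n d f) c
    = of_int (sl2_weight n d i) * f c"
proof -
  let ?h = "\<lambda>l j. raise_at n d l (lower_at n d j f) c - lower_at n d j (raise_at n d l f) c"
  have f: "f \<in> trunc_ring n d"
    using assms(1) by (simp add: tgraded_def)
  have "raise_op n d (lower_op n d f) c - lower_op n d (raise_op n d f) c
      = (\<Sum>l<n. \<Sum>j<n. ?h l j)"
    unfolding raise_op_def lower_op_def raise_at_sum lower_at_sum
    by (subst (2) sum.swap) (simp add: sum_subtractf)
  also have "\<dots> = (\<Sum>l<n. ?h l l)"
  proof (rule sum.cong[OF refl])
    fix l assume "l \<in> {..<n}"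
    have "(\<Sum>j<n. ?h l j) = (\<Sum>j<n. if j = l then ?h l l else 0)"
      by (intro sum.cong refl) (auto simp: raise_lower_at_commute)
    then show "(\<Sum>j<n. ?h l j) = ?h l l"
      using \<open>l \<in> {..<n}\<close> by simp
  qed
  also have "\<dots> = of_int (\<Sum>l<n. 2 * int (c l) + 1 - int (d l)) * f c"
    by (simp add: raise_lower_at_diag[OF _ f] sum_distrib_right)
  also have "\<dots> = of_int (sl2_weight n d i) * f c"
  proof (cases "f c = 0")
    case False
    then have "(\<Sum>l<n. c l) = i"
      using assms(1) by (simp add: tgraded_def)
    have "(\<Sum>l<n. 2 * int (c l) + 1 - int (d l)) = (\<Sum>l<n. 2 * int (c l) - int (d l - 1))"
      using assms(2) by (intro sum.cong refl) (simp add: of_nat_diff Suc_le_eq)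
    also have "\<dots> = 2 * int (\<Sum>l<n. c l) - int (\<Sum>j<n. d j - 1)"
      by (simp add: sum_subtractf sum_distrib_left)
    finally show ?thesis
      using \<open>(\<Sum>l<n. c l) = i\<close> by (simp add: sl2_weight_def)
  qed simp
  finally show ?thesis .
qed

lemma raise_op_diff: "raise_op n d (\<lambda>c. u c - w c) = (\<lambda>c. raise_op n d u c - raise_op n d w c)"
  by (auto simp: raise_op_def raise_at_def fun_eq_iff sum_subtractf[symmetric] intro!: sum.cong)

lemma raise_op_scale: "raise_op n d (\<lambda>c. s * u c) = (\<lambda>c. s * raise_op n d u c)"
  by (auto simp: raise_op_def raise_at_def fun_eq_iff sum_distrib_left intro!: sum.cong)

lemma raise_op_zero: "raise_op n d (\<lambda>_. 0) = (\<lambda>_. 0)"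
  by (simp add: raise_op_def raise_at_def)

lemma lower_op_zero: "lower_op n d (\<lambda>_. 0) = (\<lambda>_. 0)"
  by (simp add: lower_op_def lower_at_def if_distrib[of "\<lambda>x. x * 0"] cong: if_cong)

lemma raise_pow_diff:
  "(raise_op n d ^^ k) (\<lambda>c. u c - w c) = (\<lambda>c. (raise_op n d ^^ k) u c - (raise_op n d ^^ k) w c)"
  by (induction k) (simp_all add: raise_op_diff)

lemma raise_pow_zero: "(raise_op n d ^^ k) (\<lambda>_. 0) = (\<lambda>_. 0)"
  by (induction k) (simp_all add: raise_op_zero)

lemma lower_raise_pow:
  assumes "f \<in> tgraded n d i" and "\<forall>j<n. d j > 0"
  shows "lower_op n d ((raise_op n d ^^ Suc k) f) c
    = (raise_op n d ^^ Suc k) (lower_op n d f) c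
      - of_int (int (Suc k) * (sl2_weight n d i + int k)) * (raise_op n d ^^ k) f c"
proof (induction k arbitrary: c)
  case 0
  then show ?case
    using raise_lower_commutator[OF assms, of c] by (simp add: algebra_simps)
next
  case (Suc k)
  let ?E = "raise_op n d" and ?F = "lower_op n d"
  let ?g = "(?E ^^ Suc k) f" and ?s = "\<lambda>k. of_int (int (Suc k) * (sl2_weight n d i + int k)) :: 'a"
  have weight: "?s (Suc k) = ?s k + of_int (sl2_weight n d (i + Suc k))"
    unfolding of_int_add[symmetric] by (simp add: sl2_weight_def algebra_simps)
  have "?F (?E ?g) c = ?E (?F ?g) c - of_int (sl2_weight n d (i + Suc k)) * ?g c"
    using raise_lower_commutator[OF raise_pow_graded[OF assms(1)] assms(2), of "Suc k" c]
    by (simp add: algebra_simps)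
  also have "?F ?g = (\<lambda>c. (?E ^^ Suc k) (?F f) c - ?s k * (?E ^^ k) f c)"
    using Suc.IH by (simp add: fun_eq_iff)
  also have "?E (\<lambda>c. (?E ^^ Suc k) (?F f) c - ?s k * (?E ^^ k) f c) c
      - of_int (sl2_weight n d (i + Suc k)) * ?g c
      = (?E ^^ Suc (Suc k)) (?F f) c - ?s (Suc k) * (?E ^^ Suc k) f c"
    unfolding weight raise_op_diff raise_op_scale by (simp add: algebra_simps)
  finally show ?case
    by simp
qed

lemma raise_pow_lower_eq_zero:
  assumes "f \<in> tgraded n d i" and "\<forall>j<n. d j > 0" and "(raise_op n d ^^ m) f = (\<lambda>_. 0)"
  shows "(raise_op n d ^^ Suc m) (lower_op n d f) = (\<lambda>_. 0)"
proof (cases m)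
  case 0
  then show ?thesis
    using assms(3) by (simp add: lower_op_zero raise_op_zero)
next
  case (Suc k)
  let ?s = "of_int (int (Suc k) * (sl2_weight n d i + int k)) :: 'a"
  have "(raise_op n d ^^ Suc k) f = (\<lambda>_. 0)"
    using assms(3) Suc by simp
  then have "(raise_op n d ^^ m) (lower_op n d f) = (\<lambda>c. ?s * (raise_op n d ^^ k) f c)"
    using lower_raise_pow[OF assms(1,2), of k] Suc by (auto simp: lower_op_zero)
  then have "(raise_op n d ^^ Suc m) (lower_op n d f) = (\<lambda>c. ?s * (raise_op n d ^^ m) f c)"
    using Suc by (simp only: funpow.simps comp_apply raise_op_scale)
  then show ?thesis
    using assms(3) by simp
qed

lemma primitive_raise_pow_eq_zero:
  fixes f :: "(nat \<Rightarrow> nat) \<Rightarrow> 'a::field"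
  assumes "f \<in> tgraded n d i" and "\<forall>j<n. d j > 0" and "lower_op n d f = (\<lambda>_. 0)"
    and "(raise_op n d ^^ m) f = (\<lambda>_. 0)"
    and "\<forall>r<m. (of_int (int (Suc r) * (sl2_weight n d i + int r)) :: 'a) \<noteq> 0"
  shows "f = (\<lambda>_. 0)"
  using assms(4,5)
proof (induction m)
  case (Suc m)
  have "(raise_op n d ^^ m) f c = 0" for c
    using lower_raise_pow[OF assms(1,2), of m c] Suc.prems
    by (simp add: assms(3) lower_op_zero raise_pow_zero del: funpow.simps)
  then show ?case
    using Suc by (simp add: fun_eq_iff)
qed simp

section \<open>Cutting off the top layer in one variable\<close>

definition restrict_box :: "nat \<Rightarrow> (nat \<Rightarrow> nat) \<Rightarrow> ((nat \<Rightarrow> nat) \<Rightarrow> 'a::zero)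
    \<Rightarrow> ((nat \<Rightarrow> nat) \<Rightarrow> 'a)" where
  "restrict_box n d f = (\<lambda>c. if c \<in> mon_box n d then f c else 0)"

lemma restrict_box_graded: "f \<in> tgraded n d i \<Longrightarrow> restrict_box n d' f \<in> tgraded n d' i"
  by (auto simp: tgraded_def trunc_ring_def restrict_box_def)

lemma restrict_box_raise_op:
  assumes "mon_box n d' \<subseteq> mon_box n d"
  shows "restrict_box n d' (raise_op n d g) = raise_op n d' (restrict_box n d' g)"
  using assms by (auto simp: restrict_box_def raise_op_def raise_at_def mon_box_fun_upd_le fun_eq_iff
      intro!: sum.cong)

lemma restrict_box_raise_pow:
  assumes "mon_box n d' \<subseteq> mon_box n d"
  shows "restrict_box n d' ((raise_op n d ^^ k) g) = (raise_op n d' ^^ k) (restrict_box n d' g)"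
  by (induction k) (simp_all add: restrict_box_raise_op[OF assms])

text \<open>Division by x_j^(d_j - 1), identifying the ideal x_j^(d_j - 1) A with the truncated ring
  in which d_j is replaced by 1.\<close>

definition top_layer_shift :: "nat \<Rightarrow> (nat \<Rightarrow> nat) \<Rightarrow> nat \<Rightarrow> ((nat \<Rightarrow> nat) \<Rightarrow> 'a::zero)
    \<Rightarrow> ((nat \<Rightarrow> nat) \<Rightarrow> 'a)" where
  "top_layer_shift n d j f = (\<lambda>c. if c \<in> mon_box n (d(j := 1)) then f (c(j := d j - 1)) else 0)"

lemma top_layer_shift_raise_op:
  assumes "j < n" and "2 \<le> d j" and top: "\<forall>c. g c \<noteq> 0 \<longrightarrow> c j = d j - 1"
  shows "top_layer_shift n d j (raise_op n d g) = raise_op n (d(j := 1)) (top_layer_shift n d j g)"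
proof
  fix c
  show "top_layer_shift n d j (raise_op n d g) c = raise_op n (d(j := 1)) (top_layer_shift n d j g) c"
  proof (cases "c \<in> mon_box n (d(j := 1))")
    case True
    then have "c j = 0" and up: "c(j := d j - 1) \<in> mon_box n d"
      using assms(1,2) by (auto simp: mon_box_def split: if_splits)
    have "raise_at n d l g (c(j := d j - 1)) = raise_at n (d(j := 1)) l (top_layer_shift n d j g) c"
      if "l < n" for l
    proof (cases "l = j")
      case True
      then show ?thesis
        using top \<open>c j = 0\<close> up assms(2) by (auto simp: raise_at_def)
    next
      case False
      then show ?thesis
        using \<open>c \<in> mon_box n (d(j := 1))\<close> up mon_box_fun_upd_le
        by (auto simp: raise_at_def top_layer_shift_def fun_upd_twist)
    qed
    then show ?thesis
      using True up by (simp add: top_layer_shift_def raise_op_def)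
  qed (simp add: top_layer_shift_def raise_op_def raise_at_def)
qed

lemma top_layer_shift_raise_pow:
  assumes "j < n" and "2 \<le> d j" and "\<forall>k c. (raise_op n d ^^ k) g c \<noteq> 0 \<longrightarrow> c j = d j - 1"
  shows "top_layer_shift n d j ((raise_op n d ^^ k) g)
    = (raise_op n (d(j := 1)) ^^ k) (top_layer_shift n d j g)"
proof (induction k)
  case (Suc k)
  have "\<forall>c. (raise_op n d ^^ k) g c \<noteq> 0 \<longrightarrow> c j = d j - 1"
    using assms(3) by blast
  then show ?case
    using top_layer_shift_raise_op[of j n d "(raise_op n d ^^ k) g"] assms(1,2) Suc.IH
    by (simp only: funpow.simps comp_apply)
qed simp

lemma top_layer_shift_graded:
  assumes "j < n" and "f \<in> tgraded n d i"
  shows "top_layer_shift n d j f \<in> tgraded n (d(j := 1)) (i - (d j - 1))"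
  unfolding tgraded_def
proof (intro CollectI conjI allI impI)
  show "top_layer_shift n d j f \<in> trunc_ring n (d(j := 1))"
    by (simp add: top_layer_shift_def trunc_ring_def)
  fix c assume "top_layer_shift n d j f c \<noteq> 0"
  then have "c j = 0" and "(\<Sum>l<n. (c(j := d j - 1)) l) = i"
    using assms by (auto simp: top_layer_shift_def tgraded_def mon_box_def split: if_splits)
  then show "(\<Sum>l<n. c l) = i - (d j - 1)"
    using sum_fun_upd_add[of "{..<n}" j c "d j - 1"] assms(1) by simp
qed

lemma top_layer_shift_eq_zero:
  assumes "f \<in> trunc_ring n d" and "\<forall>c. f c \<noteq> 0 \<longrightarrow> c j = d j - 1"
    and "top_layer_shift n d j f = (\<lambda>_. 0)"
  shows "f = (\<lambda>_. 0)"
proof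
  fix c
  have "c(j := 0) \<in> mon_box n (d(j := 1))" if "c \<in> mon_box n d"
    using that by (auto simp: mon_box_def)
  then have "f c \<noteq> 0 \<Longrightarrow> top_layer_shift n d j f (c(j := 0)) = f c"
    using assms(1,2) by (auto simp: top_layer_shift_def trunc_ring_def fun_upd_idem)
  then show "f c = 0"
    using assms(3) by auto
qed

lemma tgraded_top_layer_eq_zero:
  assumes "j < n" and "f \<in> tgraded n d i" and "\<forall>c. f c \<noteq> 0 \<longrightarrow> c j = d j - 1"
    and "i < d j - 1"
  shows "f = (\<lambda>_. 0)"
proof
  fix c
  show "f c = 0"
  proof (rule ccontr)
    assume "f c \<noteq> 0"
    then have "c j = d j - 1" and "(\<Sum>l<n. c l) = i"
      using assms(2,3) by (auto simp: tgraded_def)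
    moreover have "c j \<le> (\<Sum>l<n. c l)"
      using assms(1) by (simp add: member_le_sum)
    ultimately show False
      using assms(4) by simp
  qed
qed

lemma raise_pow_support_top_layer:
  assumes "f \<in> tgraded n d i" and "restrict_box n (d(j := d j - 1)) f = (\<lambda>_. 0)"
    and "(raise_op n d ^^ k) f c \<noteq> 0"
  shows "c j = d j - 1"
proof -
  have "mon_box n (d(j := d j - 1)) \<subseteq> mon_box n d"
    by (auto simp: mon_box_def)
  then have "restrict_box n (d(j := d j - 1)) ((raise_op n d ^^ k) f) c = 0"
    using assms(2) by (simp add: restrict_box_raise_pow raise_pow_zero)
  then have "c \<notin> mon_box n (d(j := d j - 1))"
    using assms(3) by (simp add: restrict_box_def split: if_splits)
  moreover have "c \<in> mon_box n d"
    using raise_pow_graded[OF assms(1), of k] assms(3) by (auto simp: tgraded_def trunc_ring_def)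
  ultimately show ?thesis
    by (auto simp: mon_box_def split: if_splits)
qed

lemma raise_pow_eq_zero_reduce:
  fixes f :: "(nat \<Rightarrow> nat) \<Rightarrow> 'a::field"
  assumes "j < n" and "2 \<le> d j"
    and below_top: "\<And>g :: (nat \<Rightarrow> nat) \<Rightarrow> 'a. g \<in> tgraded n (d(j := d j - 1)) i
      \<Longrightarrow> (raise_op n (d(j := d j - 1)) ^^ m) g = (\<lambda>_. 0) \<Longrightarrow> g = (\<lambda>_. 0)"
    and top: "\<And>g :: (nat \<Rightarrow> nat) \<Rightarrow> 'a. d j - 1 \<le> i
      \<Longrightarrow> g \<in> tgraded n (d(j := 1)) (i - (d j - 1))
      \<Longrightarrow> (raise_op n (d(j := 1)) ^^ m) g = (\<lambda>_. 0) \<Longrightarrow> g = (\<lambda>_. 0)"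
    and f: "f \<in> tgraded n d i" and kernel: "(raise_op n d ^^ m) f = (\<lambda>_. 0)"
  shows "f = (\<lambda>_. 0)"
proof -
  have sub: "mon_box n (d(j := d j - 1)) \<subseteq> mon_box n d"
    by (auto simp: mon_box_def)
  have "(raise_op n (d(j := d j - 1)) ^^ m) (restrict_box n (d(j := d j - 1)) f) = (\<lambda>_. 0)"
    using restrict_box_raise_pow[OF sub, of m f] kernel by (simp add: restrict_box_def)
  then have "restrict_box n (d(j := d j - 1)) f = (\<lambda>_. 0)"
    by (rule below_top[OF restrict_box_graded[OF f]])
  then have support: "\<forall>k c. (raise_op n d ^^ k) f c \<noteq> 0 \<longrightarrow> c j = d j - 1"
    using raise_pow_support_top_layer[OF f] by blast
  show ?thesis
  proof (cases "d j - 1 \<le> i")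
    case True
    have "top_layer_shift n d j f = (\<lambda>_. 0)"
      using top[OF True top_layer_shift_graded[OF assms(1) f]] kernel
        top_layer_shift_raise_pow[OF assms(1,2) support, of m]
      by (simp add: top_layer_shift_def)
    moreover have "f \<in> trunc_ring n d"
      using f by (simp add: tgraded_def)
    ultimately show ?thesis
      using top_layer_shift_eq_zero support[rule_format, of 0] by (metis funpow_0)
  next
    case False
    then show ?thesis
      using tgraded_top_layer_eq_zero[OF assms(1) f] support[rule_format, of 0] by simp
  qed
qed

section \<open>Injectivity\<close>

lemma sum_pred_fun_upd:
  fixes d :: "nat \<Rightarrow> nat"
  assumes "j < n"
  shows "(\<Sum>l<n. (d(j := v)) l - 1) + (d j - 1) = (\<Sum>l<n. d l - 1) + (v - 1)"
proof -
  have "(\<Sum>l<n. (d(j := v)) l - 1) = sum ((\<lambda>l. d l - 1)(j := v - 1)) {..<n}"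
    by (intro sum.cong) auto
  then show ?thesis
    using sum_fun_upd_add[of "{..<n}" j "\<lambda>l. d l - 1" "v - 1"] assms by simp
qed

lemma of_int_Suc_mult_diff_nonzero:
  assumes "\<forall>k. 0 < k \<longrightarrow> k \<le> m \<longrightarrow> (of_nat k :: 'a::field) \<noteq> 0" and "r < m"
  shows "(of_int (int (Suc r) * (int r - int m)) :: 'a) \<noteq> 0"
proof -
  have "(of_int (int (Suc r) * (int r - int m)) :: 'a) = - (of_nat (Suc r) * of_nat (m - r))"
    using assms(2) by (simp add: of_nat_diff algebra_simps)
  moreover have "(of_nat (Suc r) :: 'a) \<noteq> 0" and "(of_nat (m - r) :: 'a) \<noteq> 0"
    using assms(1)[rule_format, of "Suc r"] assms(1)[rule_format, of "m - r"] assms(2) by auto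
  ultimately show ?thesis
    by simp
qed

lemma raise_pow_eq_zero_below_middle:
  fixes f :: "(nat \<Rightarrow> nat) \<Rightarrow> 'a::field"
  assumes smaller_boxes: "\<And>d' i' m' (f' :: (nat \<Rightarrow> nat) \<Rightarrow> 'a).
      (\<Sum>j<n. d' j - 1) < (\<Sum>j<n. d j - 1) \<Longrightarrow> \<forall>j<n. d' j > 0 \<Longrightarrow>
      2 * i' + m' \<le> (\<Sum>j<n. d' j - 1) \<Longrightarrow>
      \<forall>k. 0 < k \<longrightarrow> k \<le> i' + m' \<longrightarrow> (of_nat k :: 'a) \<noteq> 0 \<Longrightarrow>
      f' \<in> tgraded n d' i' \<Longrightarrow> (raise_op n d' ^^ m') f' = (\<lambda>_. 0) \<Longrightarrow> f' = (\<lambda>_. 0)"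
    and "\<forall>j<n. d j > 0" and below: "2 * i + m < (\<Sum>j<n. d j - 1)"
    and "\<forall>k. 0 < k \<longrightarrow> k \<le> i + m \<longrightarrow> (of_nat k :: 'a) \<noteq> 0"
    and "f \<in> tgraded n d i" and "(raise_op n d ^^ m) f = (\<lambda>_. 0)"
  shows "f = (\<lambda>_. 0)"
proof -
  let ?t = "\<Sum>j<n. d j - 1"
  have "\<exists>j<n. 2 \<le> d j"
  proof (rule ccontr)
    assume "\<not> (\<exists>j<n. 2 \<le> d j)"
    then have "\<forall>l<n. d l - 1 = 0"
      by auto
    then show False
      using below by simp
  qed
  then obtain j where j: "j < n" "2 \<le> d j"
    by blast
  show ?thesis
  proof (rule raise_pow_eq_zero_reduce[OF j _ _ assms(5,6)])
    fix h :: "(nat \<Rightarrow> nat) \<Rightarrow> 'a"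
    assume "h \<in> tgraded n (d(j := d j - 1)) i"
      and "(raise_op n (d(j := d j - 1)) ^^ m) h = (\<lambda>_. 0)"
    moreover have "(\<Sum>l<n. (d(j := d j - 1)) l - 1) + 1 = ?t"
      using sum_pred_fun_upd[OF j(1), of d "d j - 1"] j(2) by simp
    ultimately show "h = (\<lambda>_. 0)"
      using smaller_boxes[of "d(j := d j - 1)" i m h] assms(2,4) below j by fastforce
  next
    fix h :: "(nat \<Rightarrow> nat) \<Rightarrow> 'a"
    assume "d j - 1 \<le> i" and "h \<in> tgraded n (d(j := 1)) (i - (d j - 1))"
      and "(raise_op n (d(j := 1)) ^^ m) h = (\<lambda>_. 0)"
    moreover have "(\<Sum>l<n. (d(j := 1)) l - 1) + (d j - 1) = ?t"
      using sum_pred_fun_upd[OF j(1), of d 1] by simp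
    ultimately show "h = (\<lambda>_. 0)"
      using smaller_boxes[of "d(j := 1)" "i - (d j - 1)" m h] assms(2,4) below j by fastforce
  qed
qed

lemma raise_pow_eq_zero:
  fixes f :: "(nat \<Rightarrow> nat) \<Rightarrow> 'a::field"
  assumes "\<forall>j<n. d j > 0" and "2 * i + m \<le> (\<Sum>j<n. d j - 1)"
    and "\<forall>k. 0 < k \<longrightarrow> k \<le> i + m \<longrightarrow> (of_nat k :: 'a) \<noteq> 0"
    and "f \<in> tgraded n d i" and "(raise_op n d ^^ m) f = (\<lambda>_. 0)"
  shows "f = (\<lambda>_. 0)"
  using assms
proof (induction "\<Sum>j<n. d j - 1" arbitrary: d i m f rule: less_induct)
  case less
  have below_middle: "g = (\<lambda>_. 0)"
    if "2 * i' + m' < (\<Sum>j<n. d j - 1)"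
      "\<forall>k. 0 < k \<longrightarrow> k \<le> i' + m' \<longrightarrow> (of_nat k :: 'a) \<noteq> 0"
      "g \<in> tgraded n d i'" "(raise_op n d ^^ m') g = (\<lambda>_. 0)"
    for i' m' and g :: "(nat \<Rightarrow> nat) \<Rightarrow> 'a"
    using less.hyps less.prems(1) that by (rule raise_pow_eq_zero_below_middle)
  show ?case
  proof (cases "2 * i + m < (\<Sum>j<n. d j - 1)")
    case True
    then show ?thesis
      by (rule below_middle[OF _ less.prems(3-5)])
  next
    case False
    then have middle: "(\<Sum>j<n. d j - 1) = 2 * i + m"
      using less.prems(2) by simp
    have primitive: "lower_op n d f = (\<lambda>_. 0)"
    proof (cases i)
      case 0
      then show ?thesis
        using lower_op_degree_zero less.prems(4) by blast
    next
      case (Suc i')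
      show ?thesis
        by (rule below_middle[of i' "Suc m"])
          (use Suc middle less.prems(3) lower_op_graded[OF less.prems(4)]
            raise_pow_lower_eq_zero[OF less.prems(4,1,5)] in auto)
    qed
    have "sl2_weight n d i + int r = int r - int m" for r
      using middle by (simp add: sl2_weight_def)
    moreover have "\<forall>k. 0 < k \<longrightarrow> k \<le> m \<longrightarrow> (of_nat k :: 'a) \<noteq> 0"
      using less.prems(3) by auto
    ultimately have "\<forall>r<m. (of_int (int (Suc r) * (sl2_weight n d i + int r)) :: 'a) \<noteq> 0"
      using of_int_Suc_mult_diff_nonzero by metis
    then show ?thesis
      by (rule primitive_raise_pow_eq_zero[OF less.prems(4,1) primitive less.prems(5)])
  qed
qed

lemma tgraded_diff:
  "f \<in> tgraded n d i \<Longrightarrow> g \<in> tgraded n d i \<Longrightarrow> (\<lambda>c. f c - g c) \<in> tgraded n d i"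
  by (auto simp: tgraded_def trunc_ring_def) (metis diff_self)

lemma of_nat_neq_0_below_char: "0 < k \<Longrightarrow> k < CHAR('a) \<Longrightarrow> (of_nat k :: 'a::semiring_1) \<noteq> 0"
  by (auto simp: of_nat_eq_0_iff_char_dvd dest: dvd_imp_le)

theorem theorem2p2:
  fixes n p m i :: nat and d :: "nat \<Rightarrow> nat" and t :: nat
  assumes "CHAR('a::field) = p" and "p > 0"
    and "\<forall>j<n. d j > 0"
    and "t = (\<Sum>j<n. d j - 1)"
    and "m > 0" and "m + t < 2 * p"
    and "2 * i + m \<le> t"
  shows "inj_on (\<lambda>f. tmul n d f (tpow n d (tlin n d :: (nat \<Rightarrow> nat) \<Rightarrow> 'a) m))
           (tgraded n d i)"
proof (rule inj_onI)
  fix f g :: "(nat \<Rightarrow> nat) \<Rightarrow> 'a"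
  assume f: "f \<in> tgraded n d i" and g: "g \<in> tgraded n d i"
    and "tmul n d f (tpow n d (tlin n d) m) = tmul n d g (tpow n d (tlin n d) m)"
  moreover have "f \<in> trunc_ring n d" and "g \<in> trunc_ring n d"
    using f g by (simp_all add: tgraded_def)
  ultimately have "(raise_op n d ^^ m) f = (raise_op n d ^^ m) g"
    by (simp add: tmul_tpow_tlin[OF assms(3)])
  then have kernel: "(raise_op n d ^^ m) (\<lambda>c. f c - g c) = (\<lambda>_. 0)"
    by (simp add: raise_pow_diff)
  have "i + m < CHAR('a)"
    using assms(1,4,6,7) by linarith
  then have "\<forall>k. 0 < k \<longrightarrow> k \<le> i + m \<longrightarrow> (of_nat k :: 'a) \<noteq> 0"
    by (meson le_less_trans of_nat_neq_0_below_char)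
  then have "(\<lambda>c. f c - g c) = (\<lambda>_. 0)"
    using raise_pow_eq_zero[OF assms(3) _ _ tgraded_diff[OF f g] kernel] assms(4,7) by blast
  then show "f = g"
    by (simp add: fun_eq_iff)
qed

end
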